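(* For each $n\in\mathbb N$, let $\phi_n=(\phi_n(\theta),\theta\in\mathcal T)$ be a right-CE nonnegative supermartingale family, and suppose that the sequence $(\phi_n)$ is non-decreasing, i.e. for each $n$ and each $\theta\in\mathcal T$, $\phi_n(\theta)\le\phi_{n+1}(\theta)$ a.s. Then the family $\phi$ defined by $\phi(\theta)=\limsup_{n\to\infty}\phi_n(\theta)$, $\theta\in\mathcal T$, is a right-CE supermartingale family.
   Context: Filtered probability space $(\Omega,\mathcal F,(\mathcal F_t)_{0\le t\le T},P)$ satisfying the usual conditions, $\mathcal F=\mathcal F_T$, $\mathcal F_0$ trivial, $T\in(0,\infty)$. $\mathcal T$: stopping times valued in $[0,T]$. A family $\phi=(\phi(\theta),\theta\in\mathcal T)$ of $\overline{\mathbb R}$-valued random variables is admissible if each $\phi(\theta)$ is $\mathcal F_\theta$-measurable and $\phi(\theta)=\phi(\theta')$ a.s. on $\{\theta=\theta'\}$. An admissible $\phi$ with $E[\operatorname{ess\,sup}_\theta\phi(\theta)^-]<\infty$ is a supermartingale family if $E[\phi(\theta)\mid\mathcal F_{\theta'}]\le\phi(\theta')$ a.s. whenever $\theta\ge\theta'$ a.s. An admissible $\phi$ is right-CE if for all $\theta\in\mathcal T$ and all sequences $(\theta_n)\subset\mathcal T$ with $\theta_n\downarrow\theta$, $E[\phi(\theta)]=\lim_nE[\phi(\theta_n)]$. *)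

theory Defs
  imports "HOL-Probability.Probability"
begin

text \<open>Setting: probability space M, filtration F indexed by real time; only times in
  [0, Tm] are relevant (F is taken constant outside [0, Tm]).\<close>

definition usual_setting :: "'a measure \<Rightarrow> (real \<Rightarrow> 'a measure) \<Rightarrow> real \<Rightarrow> bool" where
  "usual_setting M F Tm \<longleftrightarrow>
     prob_space M \<and> 0 < Tm \<and>
     filtration (space M) F \<and>
     sets (F Tm) = sets M \<and>
     (\<forall>t. Tm \<le> t \<longrightarrow> sets (F t) = sets (F Tm)) \<and>
     (\<forall>t. t \<le> 0 \<longrightarrow> sets (F t) = sets (F 0)) \<and>
     (\<forall>t\<in>{0..<Tm}. sets (F t) = (\<Inter>s\<in>{t<..Tm}. sets (F s))) \<and>
     (\<forall>N A. N \<in> sets M \<longrightarrow> emeasure M N = 0 \<longrightarrow> A \<subseteq> N \<longrightarrow> A \<in> sets (F 0)) \<and>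
     (\<forall>A\<in>sets (F 0). emeasure M A = 0 \<or> emeasure M A = 1)"

definition stopT :: "'a measure \<Rightarrow> (real \<Rightarrow> 'a measure) \<Rightarrow> real \<Rightarrow> ('a \<Rightarrow> real) set" where
  "stopT M F Tm = {\<theta>. stopping_time F \<theta> \<and> (\<forall>\<omega>\<in>space M. \<theta> \<omega> \<in> {0..Tm})}"

abbreviation Fst :: "'a measure \<Rightarrow> (real \<Rightarrow> 'a measure) \<Rightarrow> ('a \<Rightarrow> real) \<Rightarrow> 'a measure" where
  "Fst M F \<theta> \<equiv> filtration.pre_sigma (space M) F \<theta>"

definition admissible ::
  "'a measure \<Rightarrow> (real \<Rightarrow> 'a measure) \<Rightarrow> real \<Rightarrow> (('a \<Rightarrow> real) \<Rightarrow> 'a \<Rightarrow> ennreal) \<Rightarrow> bool" where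
  "admissible M F Tm \<phi> \<longleftrightarrow>
     (\<forall>\<theta>\<in>stopT M F Tm. \<phi> \<theta> \<in> borel_measurable (Fst M F \<theta>)) \<and>
     (\<forall>\<theta>\<in>stopT M F Tm. \<forall>\<theta>'\<in>stopT M F Tm.
        AE \<omega> in M. \<theta> \<omega> = \<theta>' \<omega> \<longrightarrow> \<phi> \<theta> \<omega> = \<phi> \<theta>' \<omega>)"

text \<open>Supermartingale family (for nonnegative families the integrability condition
  E[ess sup \<phi>(\<theta>)^-] < \<infinity> holds trivially, and conditional expectation is nn_cond_exp).\<close>
definition supermart_family ::
  "'a measure \<Rightarrow> (real \<Rightarrow> 'a measure) \<Rightarrow> real \<Rightarrow> (('a \<Rightarrow> real) \<Rightarrow> 'a \<Rightarrow> ennreal) \<Rightarrow> bool" where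
  "supermart_family M F Tm \<phi> \<longleftrightarrow>
     admissible M F Tm \<phi> \<and>
     (\<forall>\<theta>\<in>stopT M F Tm. \<forall>\<theta>'\<in>stopT M F Tm.
        (AE \<omega> in M. \<theta>' \<omega> \<le> \<theta> \<omega>) \<longrightarrow>
        (AE \<omega> in M. nn_cond_exp M (Fst M F \<theta>') (\<phi> \<theta>) \<omega> \<le> \<phi> \<theta>' \<omega>))"

definition right_CE ::
  "'a measure \<Rightarrow> (real \<Rightarrow> 'a measure) \<Rightarrow> real \<Rightarrow> (('a \<Rightarrow> real) \<Rightarrow> 'a \<Rightarrow> ennreal) \<Rightarrow> bool" where
  "right_CE M F Tm \<phi> \<longleftrightarrow>
     admissible M F Tm \<phi> \<and>
     (\<forall>\<theta>\<in>stopT M F Tm. \<forall>\<theta>s. (\<forall>n. \<theta>s n \<in> stopT M F Tm) \<longrightarrow>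
        (\<forall>\<omega>\<in>space M. decseq (\<lambda>n. \<theta>s n \<omega>) \<and> (\<lambda>n. \<theta>s n \<omega>) \<longlonglongrightarrow> \<theta> \<omega>) \<longrightarrow>
        (\<lambda>n. \<integral>\<^sup>+ \<omega>. \<phi> (\<theta>s n) \<omega> \<partial>M) \<longlonglongrightarrow> (\<integral>\<^sup>+ \<omega>. \<phi> \<theta> \<omega> \<partial>M))"

end

theory Submission
  imports Defs
begin

text \<open>For stopping times the limit superior of an a.s. non-decreasing sequence is a.s. its
  supremum, so measurability and admissibility pass to the limit pointwise, while the
  supermartingale inequality passes to the limit by conditional monotone convergence.
  For right continuity in expectation, the expectations \<open>E[\<phi>\<^sub>n(\<theta>\<^sub>k)]\<close> are non-decreasing in
  \<open>k\<close> (supermartingale property, \<open>\<theta>\<^sub>k\<close> decreasing) and in \<open>n\<close>, so both limits are suprema and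
  can be interchanged.\<close>

lemma limsup_eq_SUP_incseq:
  fixes f :: "nat \<Rightarrow> 'a::{complete_linorder, linorder_topology}"
  assumes "incseq f"
  shows "limsup f = (SUP n. f n)"
  using LIMSEQ_SUP[OF assms] by (intro lim_imp_Limsup) auto

lemma LIMSEQ_SUP_of_incseqs:
  fixes a :: "nat \<Rightarrow> nat \<Rightarrow> 'a::{complete_linorder, linorder_topology}"
  assumes inc: "\<And>n. incseq (a n)" and lim: "\<And>n. a n \<longlonglongrightarrow> L n"
  shows "(\<lambda>k. SUP n. a n k) \<longlonglongrightarrow> (SUP n. L n)"
proof -
  have L_eq: "L n = (SUP k. a n k)" for n
    using LIMSEQ_unique[OF lim LIMSEQ_SUP[OF inc]] .
  have "incseq (\<lambda>k. SUP n. a n k)"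
    using inc unfolding incseq_def by (auto intro!: SUP_mono)
  then have "(\<lambda>k. SUP n. a n k) \<longlonglongrightarrow> (SUP k. SUP n. a n k)"
    by (rule LIMSEQ_SUP)
  also have "(SUP k. SUP n. a n k) = (SUP n. L n)"
    by (simp add: L_eq SUP_commute[of "\<lambda>k n. a n k"])
  finally show ?thesis .
qed

context sigma_finite_subalgebra
begin

lemma nn_cond_exp_monotone_convergence_SUP:
  assumes [measurable]: "\<And>n. f n \<in> borel_measurable M"
    and inc: "\<And>n. AE x in M. f n x \<le> f (Suc n) x"
  shows "AE x in M. (SUP n. nn_cond_exp M F (f n) x) = nn_cond_exp M F (\<lambda>x. SUP n. f n x) x"
proof (rule nn_cond_exp_charact)
  fix A assume [measurable]: "A \<in> sets F"
  then have [measurable]: "A \<in> sets M"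
    using subalg by (meson subalgebra_def subsetD)
  have inc_cond_exp: "AE x in M. nn_cond_exp M F (f n) x \<le> nn_cond_exp M F (f (Suc n)) x" for n
    by (rule nn_cond_exp_mono) (auto simp: inc)
  have "(\<integral>\<^sup>+x\<in>A. (SUP n. f n x) \<partial>M) = (\<integral>\<^sup>+x. (SUP n. f n x * indicator A x) \<partial>M)"
    by (simp add: SUP_mult_right_ennreal)
  also have "\<dots> = (SUP n. \<integral>\<^sup>+x. f n x * indicator A x \<partial>M)"
  proof (rule nn_integral_monotone_convergence_SUP_AE)
    show "AE x in M. f n x * indicator A x \<le> f (Suc n) x * indicator A x" for n
      using inc[of n] by eventually_elim (auto intro: mult_right_mono)
  qed auto
  also have "\<dots> = (SUP n. \<integral>\<^sup>+x. nn_cond_exp M F (f n) x * indicator A x \<partial>M)"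
    using nn_cond_exp_intg[of "indicator A"] by (simp add: mult.commute)
  also have "\<dots> = (\<integral>\<^sup>+x. (SUP n. nn_cond_exp M F (f n) x * indicator A x) \<partial>M)"
  proof (rule nn_integral_monotone_convergence_SUP_AE[symmetric])
    show "AE x in M. nn_cond_exp M F (f n) x * indicator A x
        \<le> nn_cond_exp M F (f (Suc n)) x * indicator A x" for n
      using inc_cond_exp[of n] by eventually_elim (auto intro: mult_right_mono)
  qed auto
  also have "\<dots> = (\<integral>\<^sup>+x\<in>A. (SUP n. nn_cond_exp M F (f n) x) \<partial>M)"
    by (simp add: SUP_mult_right_ennreal)
  finally show "(\<integral>\<^sup>+x\<in>A. (SUP n. f n x) \<partial>M) = (\<integral>\<^sup>+x\<in>A. (SUP n. nn_cond_exp M F (f n) x) \<partial>M)" .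
qed auto

end

lemma AE_limsup_eq_SUP:
  assumes "\<And>n. AE x in M. f n x \<le> f (Suc n) x"
  shows "AE x in M. limsup (\<lambda>n. f n x) = (SUP n. f n x :: ennreal)"
proof -
  have "AE x in M. \<forall>n. f n x \<le> f (Suc n) x"
    using assms by (simp add: AE_all_countable)
  then show ?thesis
    by eventually_elim (simp add: limsup_eq_SUP_incseq incseq_SucI)
qed

lemma nn_integral_limsup_incseq:
  assumes [measurable]: "\<And>n. f n \<in> borel_measurable M"
    and inc: "\<And>n. AE x in M. f n x \<le> f (Suc n) x"
  shows "(\<integral>\<^sup>+x. limsup (\<lambda>n. f n x) \<partial>M) = (SUP n. \<integral>\<^sup>+x. f n x \<partial>M)"
proof -
  have "(\<integral>\<^sup>+x. limsup (\<lambda>n. f n x) \<partial>M) = (\<integral>\<^sup>+x. (SUP n. f n x) \<partial>M)"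
    by (rule nn_integral_cong_AE[OF AE_limsup_eq_SUP[where f = f, OF inc]])
  also have "\<dots> = (SUP n. \<integral>\<^sup>+x. f n x \<partial>M)"
    by (rule nn_integral_monotone_convergence_SUP_AE) (auto intro: inc)
  finally show ?thesis .
qed

lemma subalgebra_pre_sigma:
  assumes "filtration (space M) F" and "sets (F T) \<subseteq> sets M"
    and "stopping_time F \<theta>" and "\<forall>\<omega>\<in>space M. \<theta> \<omega> \<le> T"
  shows "subalgebra M (filtration.pre_sigma (space M) F \<theta>)"
proof -
  interpret filtration "space M" F by fact
  have "A \<in> sets M" if A: "A \<in> sets (pre_sigma \<theta>)" for A
  proof -
    have "A \<subseteq> space M"
      using sets.sets_into_space[OF A] space_pre_sigma by simp
    then have "{\<omega>\<in>A. \<theta> \<omega> \<le> T} = A"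
      using assms(4) by auto
    moreover have "{\<omega>\<in>A. \<theta> \<omega> \<le> T} \<in> sets (F T)"
      using sets_pre_sigmaD[OF assms(3) A] .
    ultimately show ?thesis
      using assms(2) by auto
  qed
  then show ?thesis
    unfolding subalgebra_def using space_pre_sigma by auto
qed

lemma stopT_subalgebra:
  assumes "usual_setting M F Tm" and "\<theta> \<in> stopT M F Tm"
  shows "subalgebra M (Fst M F \<theta>)"
  using assms unfolding usual_setting_def stopT_def
  by (intro subalgebra_pre_sigma[where T = Tm]) auto

lemma stopT_sigma_finite_subalgebra:
  assumes "usual_setting M F Tm" and "\<theta> \<in> stopT M F Tm"
  shows "sigma_finite_subalgebra M (Fst M F \<theta>)"
proof (rule finite_measure_subalgebra_is_sigma_finite)
  have "finite_measure M"
    using assms(1) by (simp add: usual_setting_def prob_space_def)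
  then show "finite_measure_subalgebra M (Fst M F \<theta>)"
    using stopT_subalgebra[OF assms]
    by (simp add: finite_measure_subalgebra_def finite_measure_subalgebra_axioms_def)
qed

lemma admissible_borel_measurable:
  assumes "usual_setting M F Tm" and "admissible M F Tm \<phi>" and "\<theta> \<in> stopT M F Tm"
  shows "\<phi> \<theta> \<in> borel_measurable M"
  using assms measurable_from_subalg[OF stopT_subalgebra[OF assms(1,3)]]
  unfolding admissible_def by blast

lemma admissible_limsup:
  assumes "\<And>n. admissible M F Tm (\<phi>s n)"
  shows "admissible M F Tm (\<lambda>\<theta> \<omega>. limsup (\<lambda>n. \<phi>s n \<theta> \<omega>))"
  unfolding admissible_def
proof (intro conjI ballI)
  fix \<theta> assume "\<theta> \<in> stopT M F Tm"
  then show "(\<lambda>\<omega>. limsup (\<lambda>n. \<phi>s n \<theta> \<omega>)) \<in> borel_measurable (Fst M F \<theta>)"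
    using assms unfolding admissible_def by (intro borel_measurable_limsup) auto
next
  fix \<theta> \<theta>' assume "\<theta> \<in> stopT M F Tm" "\<theta>' \<in> stopT M F Tm"
  then have "AE \<omega> in M. \<forall>n. \<theta> \<omega> = \<theta>' \<omega> \<longrightarrow> \<phi>s n \<theta> \<omega> = \<phi>s n \<theta>' \<omega>"
    using assms unfolding AE_all_countable admissible_def by auto
  then show "AE \<omega> in M. \<theta> \<omega> = \<theta>' \<omega> \<longrightarrow> limsup (\<lambda>n. \<phi>s n \<theta> \<omega>) = limsup (\<lambda>n. \<phi>s n \<theta>' \<omega>)"
    by eventually_elim simp
qed

lemma supermart_family_nn_integral_antimono:
  assumes S: "usual_setting M F Tm" and sm: "supermart_family M F Tm \<phi>"
    and \<theta>: "\<theta> \<in> stopT M F Tm" and \<theta>': "\<theta>' \<in> stopT M F Tm"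
    and le: "\<forall>\<omega>\<in>space M. \<theta>' \<omega> \<le> \<theta> \<omega>"
  shows "(\<integral>\<^sup>+\<omega>. \<phi> \<theta> \<omega> \<partial>M) \<le> (\<integral>\<^sup>+\<omega>. \<phi> \<theta>' \<omega> \<partial>M)"
proof -
  interpret sigma_finite_subalgebra M "Fst M F \<theta>'"
    by (rule stopT_sigma_finite_subalgebra[OF S \<theta>'])
  have [measurable]: "\<phi> \<theta> \<in> borel_measurable M"
    using sm \<theta> by (auto intro: admissible_borel_measurable[OF S] simp: supermart_family_def)
  have "(\<integral>\<^sup>+\<omega>. \<phi> \<theta> \<omega> \<partial>M) = (\<integral>\<^sup>+\<omega>. nn_cond_exp M (Fst M F \<theta>') (\<phi> \<theta>) \<omega> \<partial>M)"
    using nn_cond_exp_intg[of "\<lambda>_. 1" "\<phi> \<theta>"] by simp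
  also have "\<dots> \<le> (\<integral>\<^sup>+\<omega>. \<phi> \<theta>' \<omega> \<partial>M)"
  proof (rule nn_integral_mono_AE)
    have "AE \<omega> in M. \<theta>' \<omega> \<le> \<theta> \<omega>"
      using le by (intro AE_I2) auto
    then show "AE \<omega> in M. nn_cond_exp M (Fst M F \<theta>') (\<phi> \<theta>) \<omega> \<le> \<phi> \<theta>' \<omega>"
      using sm \<theta> \<theta>' unfolding supermart_family_def by auto
  qed
  finally show ?thesis .
qed

lemma supermart_family_limsup:
  assumes S: "usual_setting M F Tm"
    and sm: "\<And>n. supermart_family M F Tm (\<phi>s n)"
    and mono: "\<And>n \<theta>. \<theta> \<in> stopT M F Tm \<Longrightarrow> AE \<omega> in M. \<phi>s n \<theta> \<omega> \<le> \<phi>s (Suc n) \<theta> \<omega>"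
  shows "supermart_family M F Tm (\<lambda>\<theta> \<omega>. limsup (\<lambda>n. \<phi>s n \<theta> \<omega>))"
  unfolding supermart_family_def
proof (intro conjI ballI impI)
  show "admissible M F Tm (\<lambda>\<theta> \<omega>. limsup (\<lambda>n. \<phi>s n \<theta> \<omega>))"
    using sm by (intro admissible_limsup) (simp add: supermart_family_def)
next
  fix \<theta> \<theta>' assume \<theta>: "\<theta> \<in> stopT M F Tm" and \<theta>': "\<theta>' \<in> stopT M F Tm"
    and le: "AE \<omega> in M. \<theta>' \<omega> \<le> \<theta> \<omega>"
  interpret sigma_finite_subalgebra M "Fst M F \<theta>'"
    by (rule stopT_sigma_finite_subalgebra[OF S \<theta>'])
  have [measurable]: "\<phi>s n \<theta> \<in> borel_measurable M" for n
    using sm \<theta> by (auto intro: admissible_borel_measurable[OF S] simp: supermart_family_def)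
  have "AE \<omega> in M. nn_cond_exp M (Fst M F \<theta>') (\<lambda>x. limsup (\<lambda>n. \<phi>s n \<theta> x)) \<omega>
      = nn_cond_exp M (Fst M F \<theta>') (\<lambda>x. SUP n. \<phi>s n \<theta> x) \<omega>"
    by (rule nn_cond_exp_cong[OF AE_limsup_eq_SUP[where f = \<open>\<lambda>n. \<phi>s n \<theta>\<close>, OF mono[OF \<theta>]]]) auto
  moreover have "AE \<omega> in M. (SUP n. nn_cond_exp M (Fst M F \<theta>') (\<phi>s n \<theta>) \<omega>)
      = nn_cond_exp M (Fst M F \<theta>') (\<lambda>x. SUP n. \<phi>s n \<theta> x) \<omega>"
    by (rule nn_cond_exp_monotone_convergence_SUP) (auto intro: mono[OF \<theta>])
  moreover have "AE \<omega> in M. \<forall>n. nn_cond_exp M (Fst M F \<theta>') (\<phi>s n \<theta>) \<omega> \<le> \<phi>s n \<theta>' \<omega>"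
    unfolding AE_all_countable using sm \<theta> \<theta>' le unfolding supermart_family_def by blast
  moreover have "AE \<omega> in M. limsup (\<lambda>n. \<phi>s n \<theta>' \<omega>) = (SUP n. \<phi>s n \<theta>' \<omega>)"
    by (rule AE_limsup_eq_SUP[where f = \<open>\<lambda>n. \<phi>s n \<theta>'\<close>, OF mono[OF \<theta>']])
  ultimately show "AE \<omega> in M. nn_cond_exp M (Fst M F \<theta>') (\<lambda>x. limsup (\<lambda>n. \<phi>s n \<theta> x)) \<omega>
      \<le> limsup (\<lambda>n. \<phi>s n \<theta>' \<omega>)"
  proof eventually_elim
    case (elim \<omega>)
    have "(SUP n. nn_cond_exp M (Fst M F \<theta>') (\<phi>s n \<theta>) \<omega>) \<le> (SUP n. \<phi>s n \<theta>' \<omega>)"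
      using elim(3) by (auto intro!: SUP_mono)
    then show ?case
      using elim(1,2,4) by simp
  qed
qed

lemma right_CE_limsup:
  assumes S: "usual_setting M F Tm"
    and rce: "\<And>n. right_CE M F Tm (\<phi>s n)"
    and sm: "\<And>n. supermart_family M F Tm (\<phi>s n)"
    and mono: "\<And>n \<theta>. \<theta> \<in> stopT M F Tm \<Longrightarrow> AE \<omega> in M. \<phi>s n \<theta> \<omega> \<le> \<phi>s (Suc n) \<theta> \<omega>"
  shows "right_CE M F Tm (\<lambda>\<theta> \<omega>. limsup (\<lambda>n. \<phi>s n \<theta> \<omega>))"
  unfolding right_CE_def
proof (intro conjI ballI allI impI)
  show "admissible M F Tm (\<lambda>\<theta> \<omega>. limsup (\<lambda>n. \<phi>s n \<theta> \<omega>))"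
    using sm by (intro admissible_limsup) (simp add: supermart_family_def)
  have int_limsup: "(\<integral>\<^sup>+\<omega>. limsup (\<lambda>n. \<phi>s n \<theta> \<omega>) \<partial>M) = (SUP n. \<integral>\<^sup>+\<omega>. \<phi>s n \<theta> \<omega> \<partial>M)"
    if "\<theta> \<in> stopT M F Tm" for \<theta>
    using that sm mono
    by (intro nn_integral_limsup_incseq)
       (auto intro: admissible_borel_measurable[OF S] simp: supermart_family_def)
  fix \<theta> \<theta>s assume \<theta>: "\<theta> \<in> stopT M F Tm" and \<theta>s: "\<forall>k. \<theta>s k \<in> stopT M F Tm"
    and conv: "\<forall>\<omega>\<in>space M. decseq (\<lambda>k. \<theta>s k \<omega>) \<and> (\<lambda>k. \<theta>s k \<omega>) \<longlonglongrightarrow> \<theta> \<omega>"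
  have "incseq (\<lambda>k. \<integral>\<^sup>+\<omega>. \<phi>s n (\<theta>s k) \<omega> \<partial>M)" for n
  proof (rule incseq_SucI)
    show "(\<integral>\<^sup>+\<omega>. \<phi>s n (\<theta>s k) \<omega> \<partial>M) \<le> (\<integral>\<^sup>+\<omega>. \<phi>s n (\<theta>s (Suc k)) \<omega> \<partial>M)" for k
      using conv \<theta>s
      by (intro supermart_family_nn_integral_antimono[OF S sm]) (auto simp: decseq_Suc_iff)
  qed
  moreover have "(\<lambda>k. \<integral>\<^sup>+\<omega>. \<phi>s n (\<theta>s k) \<omega> \<partial>M) \<longlonglongrightarrow> (\<integral>\<^sup>+\<omega>. \<phi>s n \<theta> \<omega> \<partial>M)" for n
    using rce[of n] \<theta> \<theta>s conv unfolding right_CE_def by blast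
  ultimately have "(\<lambda>k. SUP n. \<integral>\<^sup>+\<omega>. \<phi>s n (\<theta>s k) \<omega> \<partial>M) \<longlonglongrightarrow> (SUP n. \<integral>\<^sup>+\<omega>. \<phi>s n \<theta> \<omega> \<partial>M)"
    by (rule LIMSEQ_SUP_of_incseqs)
  then show "(\<lambda>k. \<integral>\<^sup>+\<omega>. limsup (\<lambda>n. \<phi>s n (\<theta>s k) \<omega>) \<partial>M)
      \<longlonglongrightarrow> (\<integral>\<^sup>+\<omega>. limsup (\<lambda>n. \<phi>s n \<theta> \<omega>) \<partial>M)"
    using \<theta> \<theta>s by (simp add: int_limsup)
qed

theorem lemma3p6:
  fixes M :: "'a measure" and F :: "real \<Rightarrow> 'a measure" and Tm :: real
    and \<phi>s :: "nat \<Rightarrow> ('a \<Rightarrow> real) \<Rightarrow> 'a \<Rightarrow> ennreal"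
  assumes setting: "usual_setting M F Tm"
    and rce: "\<And>n. right_CE M F Tm (\<phi>s n)"
    and sm: "\<And>n. supermart_family M F Tm (\<phi>s n)"
    and mono: "\<And>n \<theta>. \<theta> \<in> stopT M F Tm \<Longrightarrow> AE \<omega> in M. \<phi>s n \<theta> \<omega> \<le> \<phi>s (Suc n) \<theta> \<omega>"
  shows "right_CE M F Tm (\<lambda>\<theta> \<omega>. limsup (\<lambda>n. \<phi>s n \<theta> \<omega>))
       \<and> supermart_family M F Tm (\<lambda>\<theta> \<omega>. limsup (\<lambda>n. \<phi>s n \<theta> \<omega>))"
  using right_CE_limsup[where \<phi>s = \<phi>s, OF setting rce sm mono]
    supermart_family_limsup[where \<phi>s = \<phi>s, OF setting sm mono]
  by blast

end
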